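(* Let $r\ge 2$ be an integer and let $G$ be a disconnected $r$-regular graph with $n$ vertices. Suppose $$\mathrm{Spec}_Q(G)=\{[2r]^{s'},\ [0]^{s-s'},\ [r+1]^{a},\ [r-1]^{b}\},$$ where $a,b,s,s'$ are non-negative integers with $n=s+a+b$ and $s>s'>1$. Then $a=r(s-s')$, $b=rs'$, $r=\frac ns-1$, and $$G\cong gK_{r+1}\ \cup\ h\,(K_{r+1,r+1}\setminus F),$$ where $g=2s'-s$, $h=s-s'$, and $F$ is a perfect matching of $K_{r+1,r+1}$.
   Context: All graphs are finite, simple and undirected. $Q(G)=D(G)+A(G)$ is the signless Laplacian matrix (degree diagonal matrix plus adjacency matrix), and $\mathrm{Spec}_Q(G)$ is the multiset of its eigenvalues; $[x]^a$ denotes the value $x$ with multiplicity $a$. $K_{r+1,r+1}\setminus F$ denotes the graph obtained from the complete bipartite graph $K_{r+1,r+1}$ by deleting the edges of a perfect matching $F$. For a graph $H$ and integer $k\ge0$, $kH$ is the disjoint union of $k$ copies of $H$, and $\cup$ denotes disjoint union. *)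

theory Defs
  imports "Jordan_Normal_Form.Char_Poly" "HOL-Library.Multiset"
begin

text \<open>A finite simple graph is given by a finite vertex set V and an edge relation E
  (only its restriction to V matters); simple = symmetric and irreflexive on V.\<close>

type_synonym 'a graph = "'a set \<times> ('a \<Rightarrow> 'a \<Rightarrow> bool)"

definition verts :: "'a graph \<Rightarrow> 'a set" where "verts G = fst G"
definition adj :: "'a graph \<Rightarrow> 'a \<Rightarrow> 'a \<Rightarrow> bool"
  where "adj G u v = (u \<in> fst G \<and> v \<in> fst G \<and> snd G u v)"

definition simple_graph :: "'a graph \<Rightarrow> bool" where
  "simple_graph G = (finite (verts G) \<and> (\<forall>u v. adj G u v \<longrightarrow> adj G v u)
                       \<and> (\<forall>u. \<not> adj G u u))"

definition degree :: "'a graph \<Rightarrow> 'a \<Rightarrow> nat" where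
  "degree G u = card {v \<in> verts G. adj G u v}"

definition regular :: "'a graph \<Rightarrow> nat \<Rightarrow> bool" where
  "regular G r = (\<forall>u \<in> verts G. degree G u = r)"

definition connected :: "'a graph \<Rightarrow> bool" where
  "connected G = (verts G \<noteq> {} \<and> (\<forall>u \<in> verts G. \<forall>v \<in> verts G. (adj G)\<^sup>*\<^sup>* u v))"

definition graph_iso :: "'a graph \<Rightarrow> 'b graph \<Rightarrow> bool" where
  "graph_iso G H = (\<exists>f. bij_betw f (verts G) (verts H) \<and>
      (\<forall>u \<in> verts G. \<forall>v \<in> verts G. adj G u v \<longleftrightarrow> adj H (f u) (f v)))"

definition signless_laplacian :: "nat graph \<Rightarrow> nat \<Rightarrow> real mat" where
  "signless_laplacian G n = mat n n (\<lambda>(i,j).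
     (if i = j then real (degree G i) else 0) + (if adj G i j then 1 else 0))"

definition eig_mult :: "real mat \<Rightarrow> real \<Rightarrow> nat" where
  "eig_mult A x = order x (char_poly A)"

definition has_spectrum :: "real mat \<Rightarrow> real multiset \<Rightarrow> bool" where
  "has_spectrum A M = (\<forall>x. eig_mult A x = count M x)"

definition complete_graph :: "nat \<Rightarrow> nat graph" where
  "complete_graph m = ({..<m}, \<lambda>u v. u \<noteq> v)"

definition complete_bipartite :: "nat \<Rightarrow> (nat \<times> bool) graph" where
  "complete_bipartite m = ({..<m} \<times> UNIV, \<lambda>u v. snd u \<noteq> snd v)"

definition perfect_matching :: "'a graph \<Rightarrow> 'a set set \<Rightarrow> bool" where
  "perfect_matching G F = ((\<forall>e \<in> F. \<exists>u v. e = {u, v} \<and> adj G u v) \<and>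
      (\<forall>u \<in> verts G. \<exists>!e. e \<in> F \<and> u \<in> e))"

definition delete_edges :: "'a graph \<Rightarrow> 'a set set \<Rightarrow> 'a graph" where
  "delete_edges G F = (verts G, \<lambda>u v. adj G u v \<and> {u, v} \<notin> F)"

definition copies :: "nat \<Rightarrow> 'a graph \<Rightarrow> (nat \<times> 'a) graph" where
  "copies k H = ({..<k} \<times> verts H, \<lambda>(c, u) (d, v). c = d \<and> adj H u v)"

definition disj_union :: "'a graph \<Rightarrow> 'b graph \<Rightarrow> ('a + 'b) graph" where
  "disj_union G H = (Inl ` verts G \<union> Inr ` verts H,
     \<lambda>x y. case (x, y) of (Inl u, Inl v) \<Rightarrow> adj G u v
                       | (Inr u, Inr v) \<Rightarrow> adj H u v
                       | _ \<Rightarrow> False)"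

end

(*
  The adjacency matrix A = Q - r I has its eigenvalues in {1, -1, r, -r}, and since it is symmetric
  this gives (A\<^sup>2 - I)(A\<^sup>2 - r\<^sup>2 I) = 0. On the entries of A\<^sup>2, the numbers \<mu>(u, v) of common
  neighbours, this identity forces \<mu>(u, v) \<in> {0, r - 1} for u \<noteq> v, so sharing a neighbour
  partitions the vertices into blocks of r + 1 vertices. All neighbours of a vertex lie in one
  block: if it is the vertex's own block, the block is a clique K_{r+1}; otherwise the vertex
  misses exactly one vertex of that block, and the two blocks span a K_{r+1,r+1} minus a
  perfect matching. Comparing the traces of A, A\<^sup>2 and A\<^sup>3 computed from the spectrum with those
  computed from this structure determines a, b and the numbers 2s' - s and s - s' of components
  of either kind.
*)

theory Submission
  imports Defs "Jordan_Normal_Form.Schur_Decomposition"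
begin

section \<open>Linear factors and characteristic polynomials\<close>

lemma order_prod_mset_linear_factors:
  "Polynomial.order x (\<Prod>y\<in>#M. [:-y, 1:]) = count M (x :: 'a :: idom)"
proof (induction M)
  case (add y M)
  have "(\<Prod>y\<in>#M. [:-y, 1:]) \<noteq> (0 :: 'a poly)"
    by (auto simp: prod_mset_zero_iff)
  then have "Polynomial.order x (\<Prod>y\<in>#add_mset y M. [:-y, 1:])
      = Polynomial.order x [:-y, 1:] + Polynomial.order x (\<Prod>y\<in>#M. [:-y, 1:])"
    unfolding image_mset_add_mset prod_mset.add_mset
    by (intro order_mult) (metis mult_eq_0_iff pCons_eq_0_iff one_neq_zero)
  also have "Polynomial.order x [:-y, 1:] = of_bool (x = y)"
    using order_power_n_n[of x 1] by (auto intro: order_0I)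
  finally show ?case
    by (simp only: add.IH count_add_mset) simp
qed simp

lemma prod_mset_linear_factors_dvd:
  fixes p :: "'a :: idom poly"
  assumes "p \<noteq> 0" and "\<And>x. count M x \<le> Polynomial.order x p"
  shows "(\<Prod>y\<in>#M. [:-y, 1:]) dvd p"
  using assms(2)
proof (induction M)
  case (add x M)
  have "(\<Prod>y\<in>#M. [:-y, 1:]) dvd p"
  proof (rule add.IH)
    show "count M z \<le> Polynomial.order z p" for z
      using add.prems[of z] by (simp split: if_splits)
  qed
  then obtain q where pq: "p = (\<Prod>y\<in>#M. [:-y, 1:]) * q" by blast
  with assms(1) have "Polynomial.order x p = count M x + Polynomial.order x q"
    by (simp add: order_mult order_prod_mset_linear_factors)
  with add.prems[of x] have "[:-x, 1:] ^ 1 dvd q"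
    by (intro order_divides[THEN iffD2]) auto
  then obtain q' where "q = [:-x, 1:] * q'" by auto
  with pq have "p = ([:-x, 1:] * (\<Prod>y\<in>#M. [:-y, 1:])) * q'"
    by (simp only: ac_simps)
  then show ?case
    unfolding image_mset_add_mset prod_mset.add_mset by (rule dvdI)
qed simp

lemma char_poly_eq_prod_linear_factors:
  assumes L: "L \<in> carrier_mat n n" and "has_spectrum L M" and "size M = n"
  shows "\<exists>es. mset es = M \<and> char_poly L = (\<Prod>e\<leftarrow>es. [:-e, 1:])"
proof -
  obtain es where es: "mset es = M" using ex_mset by blast
  let ?q = "(\<Prod>e\<leftarrow>es. [:-e, 1:]) :: real poly"
  have deg: "Polynomial.degree (char_poly L) = n" and lc: "lead_coeff (char_poly L) = 1"
    using degree_monic_char_poly[OF L] by auto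
  then have "char_poly L \<noteq> 0" by auto
  moreover have "\<And>x. count M x \<le> Polynomial.order x (char_poly L)"
    using assms(2) by (simp add: has_spectrum_def eig_mult_def)
  ultimately have "(\<Prod>y\<in>#M. [:-y, 1:]) dvd char_poly L"
    by (rule prod_mset_linear_factors_dvd)
  moreover have "(\<Prod>y\<in>#M. [:-y, 1:]) = ?q"
    unfolding es[symmetric] mset_map[symmetric] prod_mset_prod_list ..
  ultimately obtain c where c: "char_poly L = ?q * c" by (metis dvdE)
  have "monic ?q" by (rule monic_prod_list) auto
  then have "?q \<noteq> 0" by auto
  moreover have "c \<noteq> 0" using c \<open>char_poly L \<noteq> 0\<close> by auto
  ultimately have "Polynomial.degree (char_poly L) = Polynomial.degree ?q + Polynomial.degree c"
    using c by (simp add: degree_mult_eq)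
  moreover have "Polynomial.degree ?q = n"
    using degree_linear_factors[of uminus es] assms(3) es by auto
  ultimately have "Polynomial.degree c = 0" using deg by simp
  moreover have "lead_coeff c = 1"
    using c lc \<open>monic ?q\<close> by (simp add: lead_coeff_mult)
  ultimately have "c = 1" by (metis degree_0_id one_pCons)
  with c es show ?thesis by auto
qed

section \<open>Similarity, trace and triangular matrices\<close>

lemma similar_mat_wit_add:
  assumes AB: "similar_mat_wit A B P Q" and AB': "similar_mat_wit A' B' P Q"
  shows "similar_mat_wit (A + A') (B + B') P Q"
proof -
  define n where "n = dim_row A"
  note w = similar_mat_witD[OF n_def AB]
  define n' where "n' = dim_row A'"
  note w' = similar_mat_witD[OF n'_def AB']
  have "n' = n" using w(6) w'(6) by auto
  note w' = w'[unfolded this]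
  have "P * (B + B') * Q = P * B * Q + P * B' * Q"
    by (simp only: mult_add_distrib_mat[OF w(6) w(5) w'(5)]
        add_mult_distrib_mat[OF mult_carrier_mat[OF w(6) w(5)] mult_carrier_mat[OF w(6) w'(5)] w(7)])
  then have "A + A' = P * (B + B') * Q" by (simp only: w(3) w'(3))
  with w w' show ?thesis by (intro similar_mat_witI) auto
qed

lemma similar_mat_wit_smult_one:
  fixes A :: "'a :: comm_ring_1 mat"
  assumes "similar_mat_wit A B P Q" and "A \<in> carrier_mat n n"
  shows "similar_mat_wit (k \<cdot>\<^sub>m 1\<^sub>m n) (k \<cdot>\<^sub>m 1\<^sub>m n) P Q"
proof -
  note w = similar_mat_witD2[OF assms(2,1)]
  have "P * 1\<^sub>m n * Q = 1\<^sub>m n" by (simp only: right_mult_one_mat[OF w(6)] w(1))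
  with w have "similar_mat_wit (1\<^sub>m n) (1\<^sub>m n) P Q" by (intro similar_mat_witI) auto
  then show ?thesis by (rule similar_mat_wit_smult)
qed

lemma index_mult_mat_sum:
  assumes "X \<in> carrier_mat n m" "Y \<in> carrier_mat m k" "i < n" "j < k"
  shows "(X * Y) $$ (i, j) = (\<Sum>l<m. X $$ (i, l) * Y $$ (l, j))"
  using assms by (simp add: scalar_prod_def atLeast0LessThan)

definition mat_trace :: "'a :: comm_ring_1 mat \<Rightarrow> 'a" where
  "mat_trace A = (\<Sum>i<dim_row A. A $$ (i, i))"

lemma mat_trace_mult_comm:
  assumes "X \<in> carrier_mat n m" "Y \<in> carrier_mat m n"
  shows "mat_trace (X * Y) = mat_trace (Y * X)"
proof -
  have "mat_trace (X * Y) = (\<Sum>i<n. \<Sum>l<m. X $$ (i, l) * Y $$ (l, i))"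
    unfolding mat_trace_def using assms by (auto simp: index_mult_mat_sum simp del: index_mult_mat(1) intro!: sum.cong)
  also have "\<dots> = (\<Sum>l<m. \<Sum>i<n. Y $$ (l, i) * X $$ (i, l))"
    by (subst sum.swap) (simp add: mult.commute)
  also have "\<dots> = mat_trace (Y * X)"
    unfolding mat_trace_def using assms by (auto simp: index_mult_mat_sum simp del: index_mult_mat(1) intro!: sum.cong)
  finally show ?thesis .
qed

lemma mat_trace_similar:
  assumes "similar_mat_wit A B P Q"
  shows "mat_trace A = mat_trace B"
proof -
  define n where "n = dim_row A"
  note w = similar_mat_witD[OF n_def assms]
  have "mat_trace A = mat_trace ((B * Q) * P)"
    using w mat_trace_mult_comm[of P n n "B * Q"] by simp
  also have "(B * Q) * P = B"
    using w by simp
  finally show ?thesis .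
qed

lemma symmetric_mat_eq_0_if_trace_square_eq_0:
  fixes N :: "'a :: linordered_idom mat"
  assumes N: "N \<in> carrier_mat n n" and sym: "transpose_mat N = N" and tr: "mat_trace (N * N) = 0"
  shows "N = 0\<^sub>m n n"
proof -
  have "N $$ (l, i) = N $$ (i, l)" if "i < n" "l < n" for i l
    using index_transpose_mat(1)[of i N l] N that sym by simp
  then have "(N * N) $$ (i, i) = (\<Sum>l<n. N $$ (i, l) ^ 2)" if "i < n" for i
    using N that by (simp add: index_mult_mat_sum power2_eq_square del: index_mult_mat)
  with tr N have "(\<Sum>i<n. \<Sum>l<n. N $$ (i, l) ^ 2) = 0"
    by (simp add: mat_trace_def)
  then have "\<forall>i<n. \<forall>l<n. N $$ (i, l) ^ 2 = 0"
    by (simp add: sum_nonneg_eq_0_iff sum_nonneg)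
  with N show ?thesis by (intro eq_matI) auto
qed

definition upper_triangular_with_diag ::
    "nat \<Rightarrow> 'a :: comm_ring_1 mat \<Rightarrow> (nat \<Rightarrow> 'a) \<Rightarrow> bool" where
  "upper_triangular_with_diag n B d \<longleftrightarrow>
     B \<in> carrier_mat n n \<and> (\<forall>i<n. \<forall>j\<le>i. B $$ (i, j) = (if i = j then d i else 0))"

lemma upper_triangular_with_diag_one:
  "upper_triangular_with_diag n (1\<^sub>m n) (\<lambda>_. 1)"
  unfolding upper_triangular_with_diag_def by auto

lemma upper_triangular_with_diag_add:
  "upper_triangular_with_diag n B d \<Longrightarrow> upper_triangular_with_diag n C e \<Longrightarrow>
    upper_triangular_with_diag n (B + C) (\<lambda>i. d i + e i)"
  unfolding upper_triangular_with_diag_def by auto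

lemma upper_triangular_with_diag_smult:
  "upper_triangular_with_diag n B d \<Longrightarrow> upper_triangular_with_diag n (k \<cdot>\<^sub>m B) (\<lambda>i. k * d i)"
  unfolding upper_triangular_with_diag_def by auto

lemma upper_triangular_with_diag_mult:
  assumes "upper_triangular_with_diag n B d" "upper_triangular_with_diag n C e"
  shows "upper_triangular_with_diag n (B * C) (\<lambda>i. d i * e i)"
proof -
  have B: "B \<in> carrier_mat n n"
      "\<And>i j. i < n \<Longrightarrow> j \<le> i \<Longrightarrow> B $$ (i, j) = (if i = j then d i else 0)"
    and C: "C \<in> carrier_mat n n"
      "\<And>i j. i < n \<Longrightarrow> j \<le> i \<Longrightarrow> C $$ (i, j) = (if i = j then e i else 0)"
    using assms unfolding upper_triangular_with_diag_def by auto
  have "(B * C) $$ (i, j) = (if i = j then d i * e i else 0)" if ij: "i < n" "j \<le> i" for i j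
  proof -
    have "(B * C) $$ (i, j) = (\<Sum>l<n. B $$ (i, l) * C $$ (l, j))"
      using ij B(1) C(1) by (intro index_mult_mat_sum) auto
    also have "\<dots> = (\<Sum>l<n. if l = i \<and> i = j then d i * e i else 0)"
    proof (rule sum.cong)
      show "B $$ (i, l) * C $$ (l, j) = (if l = i \<and> i = j then d i * e i else 0)" if "l \<in> {..<n}" for l
        using B(2)[of i l] C(2)[of l j] that ij by (cases "l < i") auto
    qed simp
    also have "\<dots> = (if i = j then d i * e i else 0)"
      using ij by (cases "i = j") auto
    finally show ?thesis .
  qed
  with B(1) C(1) show ?thesis
    unfolding upper_triangular_with_diag_def by auto
qed

lemma upper_triangular_with_diag_pow:
  assumes "upper_triangular_with_diag n B d"
  shows "upper_triangular_with_diag n (B ^\<^sub>m k) (\<lambda>i. d i ^ k)"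
proof (induction k)
  case 0
  have "dim_row B = n" using assms unfolding upper_triangular_with_diag_def by auto
  then show ?case
    using upper_triangular_with_diag_one by simp
next
  case (Suc k)
  then show ?case
    using upper_triangular_with_diag_mult[OF Suc assms] by (simp add: mult.commute)
qed

lemma mat_trace_upper_triangular_with_diag:
  "upper_triangular_with_diag n B d \<Longrightarrow> mat_trace B = (\<Sum>i<n. d i)"
  unfolding upper_triangular_with_diag_def mat_trace_def by auto

lemma pow_mat_add:
  assumes "A \<in> carrier_mat n n"
  shows "A ^\<^sub>m (k + l) = A ^\<^sub>m k * A ^\<^sub>m l"
proof (induction l)
  case 0
  then show ?case using assms by simp
next
  case (Suc l)
  then show ?case using assms by (simp add: assoc_mult_mat[of _ n n _ n _ n])
qed

lemma pow_mat_2: "A \<in> carrier_mat n n \<Longrightarrow> A ^\<^sub>m 2 = A * A"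
  by (simp add: numeral_2_eq_2)

lemma transpose_pow_mat:
  fixes A :: "'a :: comm_semiring_1 mat"
  assumes "A \<in> carrier_mat n n"
  shows "transpose_mat (A ^\<^sub>m k) = transpose_mat A ^\<^sub>m k"
proof (induction k)
  case 0
  then show ?case using assms by simp
next
  case (Suc k)
  have "transpose_mat (A ^\<^sub>m Suc k) = transpose_mat A * transpose_mat A ^\<^sub>m k"
    using assms Suc transpose_mult[of "A ^\<^sub>m k" n n A n] by simp
  also have "\<dots> = transpose_mat A ^\<^sub>m Suc k"
    using pow_mat_add[of "transpose_mat A" n 1 k] assms by simp
  finally show ?case .
qed

lemma transpose_smult_mat: "transpose_mat (k \<cdot>\<^sub>m A) = k \<cdot>\<^sub>m transpose_mat A"
  by (rule eq_matI) auto

lemma schur_decomposition_shift: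
  fixes A :: "'a :: conjugatable_ordered_field mat"
  assumes A: "A \<in> carrier_mat n n"
    and cp: "char_poly (A + c \<cdot>\<^sub>m 1\<^sub>m n) = (\<Prod>e\<leftarrow>es. [:-e, 1:])"
  obtains B P Q where "similar_mat_wit A B P Q"
    and "upper_triangular_with_diag n B (\<lambda>i. es ! i - c)" and "length es = n"
proof -
  let ?L = "A + c \<cdot>\<^sub>m 1\<^sub>m n"
  have L: "?L \<in> carrier_mat n n" using A by simp
  obtain T P Q where "schur_decomposition ?L es = (T, P, Q)"
    by (cases "schur_decomposition ?L es") auto
  from schur_decomposition[OF L cp this]
  have sim: "similar_mat_wit ?L T P Q" and ut: "upper_triangular T" and diag: "diag_mat T = es"
    by auto
  have T: "T \<in> carrier_mat n n" using similar_mat_witD2[OF L sim] by auto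
  with diag have len: "length es = n" and "\<forall>i<n. T $$ (i, i) = es ! i"
    unfolding diag_mat_def by auto
  with T ut have "upper_triangular_with_diag n T (\<lambda>i. es ! i)"
    unfolding upper_triangular_with_diag_def by (auto dest: upper_triangularD)
  then have "upper_triangular_with_diag n (T + (-c) \<cdot>\<^sub>m 1\<^sub>m n) (\<lambda>i. es ! i - c)"
    using upper_triangular_with_diag_add[OF _
        upper_triangular_with_diag_smult[OF upper_triangular_with_diag_one, of n "-c"]]
    by simp
  moreover have "similar_mat_wit (?L + (-c) \<cdot>\<^sub>m 1\<^sub>m n) (T + (-c) \<cdot>\<^sub>m 1\<^sub>m n) P Q"
    using similar_mat_wit_add[OF sim similar_mat_wit_smult_one[OF sim L]] .
  moreover have "?L + (-c) \<cdot>\<^sub>m 1\<^sub>m n = A"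
    using A by (intro eq_matI) auto
  ultimately show ?thesis using that len by auto
qed

lemma mat_trace_pow_eq_sum_eigenvalues:
  fixes A :: "'a :: conjugatable_ordered_field mat"
  assumes A: "A \<in> carrier_mat n n"
    and cp: "char_poly (A + c \<cdot>\<^sub>m 1\<^sub>m n) = (\<Prod>e\<leftarrow>es. [:-e, 1:])"
  shows "mat_trace (A ^\<^sub>m k) = (\<Sum>e\<leftarrow>es. (e - c) ^ k)"
proof -
  obtain B P Q where sim: "similar_mat_wit A B P Q"
    and B: "upper_triangular_with_diag n B (\<lambda>i. es ! i - c)" and len: "length es = n"
    using schur_decomposition_shift[OF A cp] .
  have "mat_trace (A ^\<^sub>m k) = mat_trace (B ^\<^sub>m k)"
    by (rule mat_trace_similar[OF similar_mat_wit_pow[OF sim]])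
  also have "\<dots> = (\<Sum>i<n. (es ! i - c) ^ k)"
    by (rule mat_trace_upper_triangular_with_diag[OF upper_triangular_with_diag_pow[OF B]])
  also have "\<dots> = (\<Sum>e\<leftarrow>es. (e - c) ^ k)"
    unfolding len[symmetric] by (simp add: sum_list_sum_nth atLeast0LessThan)
  finally show ?thesis .
qed

text \<open>Triangularisation only shows that \<open>N = p(A)\<close> is similar to a matrix with zero diagonal;
  the symmetry of \<open>N\<close> turns the resulting \<open>tr (N\<^sup>2) = 0\<close> into \<open>N = 0\<close>.\<close>

lemma symmetric_mat_quartic_eq_0:
  fixes A :: "'a :: {conjugatable_ordered_field, linordered_idom} mat"
  assumes A: "A \<in> carrier_mat n n" and sym: "transpose_mat A = A"
    and cp: "char_poly (A + c \<cdot>\<^sub>m 1\<^sub>m n) = (\<Prod>e\<leftarrow>es. [:-e, 1:])"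
    and roots: "\<And>e. e \<in> set es \<Longrightarrow> (e - c) ^ 4 + \<alpha> * (e - c) ^ 2 + \<beta> = 0"
  shows "A ^\<^sub>m 4 + \<alpha> \<cdot>\<^sub>m A ^\<^sub>m 2 + \<beta> \<cdot>\<^sub>m 1\<^sub>m n = 0\<^sub>m n n"
proof -
  obtain B P Q where sim: "similar_mat_wit A B P Q"
    and B: "upper_triangular_with_diag n B (\<lambda>i. es ! i - c)" and len: "length es = n"
    using schur_decomposition_shift[OF A cp] .
  define N where "N = A ^\<^sub>m 4 + \<alpha> \<cdot>\<^sub>m A ^\<^sub>m 2 + \<beta> \<cdot>\<^sub>m 1\<^sub>m n"
  define T where "T = B ^\<^sub>m 4 + \<alpha> \<cdot>\<^sub>m B ^\<^sub>m 2 + \<beta> \<cdot>\<^sub>m 1\<^sub>m n"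
  have N: "N \<in> carrier_mat n n" using A by (simp add: N_def)
  have "similar_mat_wit N T P Q"
    unfolding N_def T_def
    by (intro similar_mat_wit_add similar_mat_wit_smult similar_mat_wit_pow sim
        similar_mat_wit_smult_one[OF sim A])
  then have "mat_trace (N ^\<^sub>m 2) = mat_trace (T ^\<^sub>m 2)"
    by (intro mat_trace_similar similar_mat_wit_pow)
  also have "\<dots> = 0"
  proof -
    have "upper_triangular_with_diag n T
        (\<lambda>i. (es ! i - c) ^ 4 + \<alpha> * (es ! i - c) ^ 2 + \<beta> * 1)"
      unfolding T_def
      by (intro upper_triangular_with_diag_add upper_triangular_with_diag_smult
          upper_triangular_with_diag_pow B upper_triangular_with_diag_one)
    moreover have "(es ! i - c) ^ 4 + \<alpha> * (es ! i - c) ^ 2 + \<beta> * 1 = 0" if "i < n" for i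
      using roots[of "es ! i"] that len by simp
    ultimately have "upper_triangular_with_diag n T (\<lambda>_. 0)"
      unfolding upper_triangular_with_diag_def by simp
    then have "upper_triangular_with_diag n (T ^\<^sub>m 2) (\<lambda>_. 0 ^ 2)"
      by (rule upper_triangular_with_diag_pow)
    then show ?thesis
      by (simp add: mat_trace_upper_triangular_with_diag)
  qed
  finally have "mat_trace (N * N) = 0"
    using N by (simp add: numeral_2_eq_2)
  moreover have "transpose_mat N = N"
    using A sym transpose_add[of "A ^\<^sub>m 4 + \<alpha> \<cdot>\<^sub>m A ^\<^sub>m 2" n n "\<beta> \<cdot>\<^sub>m 1\<^sub>m n"]
      transpose_add[of "A ^\<^sub>m 4" n n "\<alpha> \<cdot>\<^sub>m A ^\<^sub>m 2"]
    by (simp add: N_def transpose_smult_mat transpose_pow_mat)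
  ultimately show ?thesis
    using symmetric_mat_eq_0_if_trace_square_eq_0[OF N] by (simp add: N_def)
qed

section \<open>Enumerating a partition\<close>

definition enum_set :: "'a set \<Rightarrow> nat \<Rightarrow> 'a" where
  "enum_set X = (SOME f. bij_betw f {..<card X} X)"

lemma bij_betw_enum_set:
  assumes "finite X"
  shows "bij_betw (enum_set X) {..<card X} X"
proof -
  from ex_bij_betw_nat_finite[OF assms] have "\<exists>f. bij_betw f {..<card X} X"
    by (auto simp: atLeast0LessThan)
  then show ?thesis unfolding enum_set_def by (rule someI_ex)
qed

lemma bij_betw_family:
  assumes e: "bij_betw e {..<k} CC"
    and en: "\<And>X. X \<in> CC \<Longrightarrow> bij_betw (en X) {..<p} X"
    and dj: "\<And>X Y. X \<in> CC \<Longrightarrow> Y \<in> CC \<Longrightarrow> X \<noteq> Y \<Longrightarrow> X \<inter> Y = {}"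
  shows "bij_betw (\<lambda>(c,i). en (e c) i) ({..<k} \<times> {..<p}) (\<Union>CC)"
  unfolding bij_betw_def
proof
  have eC: "c < k \<Longrightarrow> e c \<in> CC" for c using e unfolding bij_betw_def by auto
  have mem: "c < k \<Longrightarrow> i < p \<Longrightarrow> en (e c) i \<in> e c" for c i
    using en[OF eC] unfolding bij_betw_def by auto
  show "inj_on (\<lambda>(c,i). en (e c) i) ({..<k} \<times> {..<p})"
  proof (rule inj_onI, clarify)
    fix c i c' i' assume a: "c < k" "i < p" "c' < k" "i' < p" and eq: "en (e c) i = en (e c') i'"
    have "e c = e c'"
    proof (rule ccontr)
      assume "e c \<noteq> e c'"
      then have "e c \<inter> e c' = {}" using dj eC a by auto
      then show False using mem[of c i] mem[of c' i'] a eq by auto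
    qed
    then have cc: "c = c'" using e a unfolding bij_betw_def inj_on_def by auto
    then have "i = i'" using en[OF eC[OF a(1)]] a eq unfolding bij_betw_def inj_on_def by auto
    then show "c = c' \<and> i = i'" using cc by simp
  qed
  show "(\<lambda>(c,i). en (e c) i) ` ({..<k} \<times> {..<p}) = \<Union>CC"
  proof
    show "(\<lambda>(c,i). en (e c) i) ` ({..<k} \<times> {..<p}) \<subseteq> \<Union>CC" using mem eC by auto
    show "\<Union>CC \<subseteq> (\<lambda>(c,i). en (e c) i) ` ({..<k} \<times> {..<p})"
    proof
      fix x assume "x \<in> \<Union>CC"
      then obtain X where X: "X \<in> CC" "x \<in> X" by auto
      then obtain c where c: "c < k" "X = e c" using e unfolding bij_betw_def by auto
      then obtain i where i: "i < p" "x = en X i" using en[OF X(1)] X(2) unfolding bij_betw_def by auto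
      show "x \<in> (\<lambda>(c,i). en (e c) i) ` ({..<k} \<times> {..<p})" using c i by force
    qed
  qed
qed

definition enum_partition :: "'a set set \<Rightarrow> nat \<times> nat \<Rightarrow> 'a" where
  "enum_partition P = (\<lambda>(c, i). enum_set (enum_set P c) i)"

lemma bij_betw_enum_partition:
  assumes "finite P" and "\<And>X. X \<in> P \<Longrightarrow> finite X \<and> card X = p" and "disjoint P"
  shows "bij_betw (enum_partition P) ({..<card P} \<times> {..<p}) (\<Union>P)"
  unfolding enum_partition_def
proof (rule bij_betw_family)
  show "bij_betw (enum_set P) {..<card P} P" using assms(1) by (rule bij_betw_enum_set)
  show "bij_betw (enum_set X) {..<p} X" if "X \<in> P" for X
    using assms(2)[OF that] bij_betw_enum_set by metis
  show "X \<inter> Y = {}" if "X \<in> P" "Y \<in> P" "X \<noteq> Y" for X Y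
    using assms(3) that by (auto simp: disjoint_def)
qed

lemma enum_partition_mem:
  assumes "finite P" and "\<And>X. X \<in> P \<Longrightarrow> finite X \<and> card X = p" and "c < card P" and "i < p"
  shows "enum_set P c \<in> P" and "enum_partition P (c, i) \<in> enum_set P c"
proof -
  show "enum_set P c \<in> P"
    using bij_betw_enum_set[OF assms(1)] assms(3) by (auto dest: bij_betw_apply)
  with assms(2,4) show "enum_partition P (c, i) \<in> enum_set P c"
    unfolding enum_partition_def using bij_betw_enum_set by (fastforce dest: bij_betw_apply)
qed

lemma bij_betw_reindex:
  assumes f: "bij_betw f A B" and j: "inj_on j A" and eq: "\<And>x. x \<in> A \<Longrightarrow> \<psi> (j x) = f x"
  shows "bij_betw \<psi> (j ` A) B"
  unfolding bij_betw_def
proof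
  show "inj_on \<psi> (j ` A)"
  proof (rule inj_onI, clarify)
    fix x y assume "x \<in> A" "y \<in> A" "\<psi> (j x) = \<psi> (j y)"
    then have "f x = f y" using eq by simp
    then show "j x = j y" using f \<open>x \<in> A\<close> \<open>y \<in> A\<close> unfolding bij_betw_def inj_on_def by auto
  qed
  show "\<psi> ` j ` A = B" using f eq unfolding bij_betw_def by (auto simp: image_image)
qed

section \<open>Graphs, adjacency matrices and the model graph\<close>

lemma graph_iso_sym:
  assumes "graph_iso G H"
  shows "graph_iso H G"
proof -
  obtain f where f: "bij_betw f (verts G) (verts H)"
    and adj: "\<forall>u \<in> verts G. \<forall>v \<in> verts G. adj G u v \<longleftrightarrow> adj H (f u) (f v)"
    using assms unfolding graph_iso_def by blast
  let ?g = "inv_into (verts G) f"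
  have g: "?g x \<in> verts G" "f (?g x) = x" if "x \<in> verts H" for x
    using that bij_betw_inv_into[OF f] bij_betw_inv_into_right[OF f] by (auto dest: bij_betw_apply)
  have "adj H x y \<longleftrightarrow> adj G (?g x) (?g y)" if "x \<in> verts H" "y \<in> verts H" for x y
    using adj g[OF that(1)] g[OF that(2)] by simp
  then show ?thesis
    unfolding graph_iso_def by (intro exI[of _ ?g] conjI ballI bij_betw_inv_into[OF f])
qed

definition adj_mat :: "nat graph \<Rightarrow> nat \<Rightarrow> real mat" where
  "adj_mat G n = mat n n (\<lambda>(u, v). of_bool (adj G u v))"

definition common_nbrs :: "nat graph \<Rightarrow> nat \<Rightarrow> nat \<Rightarrow> nat \<Rightarrow> nat" where
  "common_nbrs G n u v = card {w. w < n \<and> adj G u w \<and> adj G w v}"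

lemma adj_mat_carrier [simp]: "adj_mat G n \<in> carrier_mat n n"
  by (simp add: adj_mat_def)

lemma dim_adj_mat [simp]: "dim_row (adj_mat G n) = n" "dim_col (adj_mat G n) = n"
  by (simp_all add: adj_mat_def)

lemma index_adj_mat [simp]: "u < n \<Longrightarrow> v < n \<Longrightarrow> adj_mat G n $$ (u, v) = of_bool (adj G u v)"
  by (simp add: adj_mat_def)

lemma common_nbrs_eq_sum:
  "real (common_nbrs G n u v) = (\<Sum>w<n. of_bool (adj G u w) * of_bool (adj G w v))"
proof -
  have "{w. w < n \<and> adj G u w \<and> adj G w v} = {..<n} \<inter> {w. adj G u w \<and> adj G w v}" by auto
  then show ?thesis by (simp add: common_nbrs_def flip: of_bool_conj)
qed

lemma common_nbrs_self:
  assumes "simple_graph G" "verts G = {..<n}"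
  shows "common_nbrs G n u u = degree G u"
proof -
  have "{w. w < n \<and> adj G u w \<and> adj G w u} = {v \<in> verts G. adj G u v}"
    using assms unfolding simple_graph_def by auto
  then show ?thesis by (simp add: common_nbrs_def degree_def)
qed

lemma index_adj_mat_square:
  assumes "u < n" "v < n"
  shows "(adj_mat G n ^\<^sub>m 2) $$ (u, v) = real (common_nbrs G n u v)"
proof -
  have "(adj_mat G n ^\<^sub>m 2) $$ (u, v) = (\<Sum>w<n. adj_mat G n $$ (u, w) * adj_mat G n $$ (w, v))"
    unfolding pow_mat_2[OF adj_mat_carrier] using assms by (intro index_mult_mat_sum) auto
  also have "\<dots> = (\<Sum>w<n. of_bool (adj G u w) * of_bool (adj G w v))"
    using assms by (intro sum.cong) auto
  finally show ?thesis by (simp only: common_nbrs_eq_sum)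
qed

lemma index_adj_mat_pow4:
  assumes "u < n" "v < n"
  shows "(adj_mat G n ^\<^sub>m 4) $$ (u, v) = (\<Sum>w<n. real (common_nbrs G n u w) * real (common_nbrs G n w v))"
proof -
  have "(adj_mat G n ^\<^sub>m 4) $$ (u, v) = (\<Sum>w<n. (adj_mat G n ^\<^sub>m 2) $$ (u, w) * (adj_mat G n ^\<^sub>m 2) $$ (w, v))"
    using pow_mat_add[OF adj_mat_carrier, where k = 2 and l = 2] assms
    by (simp add: index_mult_mat_sum[of _ n n _ n] del: index_mult_mat(1))
  then show ?thesis
    using assms by (simp add: index_adj_mat_square)
qed

lemma mat_trace_adj_mat_cube:
  "mat_trace (adj_mat G n ^\<^sub>m 3) = (\<Sum>u<n. \<Sum>v<n. real (common_nbrs G n u v) * of_bool (adj G v u))"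
proof -
  have "(adj_mat G n ^\<^sub>m 3) $$ (u, u) = (\<Sum>v<n. real (common_nbrs G n u v) * of_bool (adj G v u))"
    if "u < n" for u
  proof -
    have "(adj_mat G n ^\<^sub>m 3) $$ (u, u) = (\<Sum>v<n. (adj_mat G n ^\<^sub>m 2) $$ (u, v) * adj_mat G n $$ (v, u))"
      using pow_mat_add[OF adj_mat_carrier, where k = 2 and l = 1] that
      by (simp add: index_mult_mat_sum[of _ n n _ n] del: index_mult_mat(1) sum_mult_of_bool_eq)
    also have "\<dots> = (\<Sum>v<n. real (common_nbrs G n u v) * of_bool (adj G v u))"
      using that by (intro sum.cong) (simp_all add: index_adj_mat_square)
    finally show ?thesis .
  qed
  then show ?thesis by (simp add: mat_trace_def)
qed

lemma transpose_adj_mat: "simple_graph G \<Longrightarrow> transpose_mat (adj_mat G n) = adj_mat G n"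
  unfolding simple_graph_def adj_mat_def by (intro eq_matI) auto

lemma mat_trace_adj_mat: "simple_graph G \<Longrightarrow> mat_trace (adj_mat G n) = 0"
  unfolding simple_graph_def mat_trace_def by simp

lemma mat_trace_adj_mat_square:
  assumes "simple_graph G" "verts G = {..<n}" "regular G r"
  shows "mat_trace (adj_mat G n ^\<^sub>m 2) = real n * real r"
  using assms by (simp add: mat_trace_def index_adj_mat_square common_nbrs_self regular_def)

lemma signless_laplacian_eq_adj_mat:
  assumes "simple_graph G" "verts G = {..<n}" "regular G r"
  shows "signless_laplacian G n = adj_mat G n + real r \<cdot>\<^sub>m 1\<^sub>m n"
  using assms unfolding simple_graph_def regular_def
  by (intro eq_matI) (auto simp: signless_laplacian_def adj_mat_def)

definition diag_matching :: "nat \<Rightarrow> (nat \<times> bool) set set" where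
  "diag_matching r = {{(i,False),(i,True)} | i. i < r + 1}"

lemma perfect_matching_diag_matching: "perfect_matching (complete_bipartite (r + 1)) (diag_matching r)"
  unfolding perfect_matching_def
proof
  show "\<forall>e\<in>diag_matching r. \<exists>u v. e = {u, v} \<and> adj (complete_bipartite (r + 1)) u v"
    unfolding diag_matching_def adj_def complete_bipartite_def by auto
  show "\<forall>u\<in>verts (complete_bipartite (r + 1)). \<exists>!e. e \<in> diag_matching r \<and> u \<in> e"
  proof
    fix u assume "u \<in> verts (complete_bipartite (r + 1))"
    then obtain i b where u: "u = (i,b)" "i < r + 1" unfolding verts_def complete_bipartite_def by auto
    show "\<exists>!e. e \<in> diag_matching r \<and> u \<in> e"
    proof (rule ex1I[of _ "{(i,False),(i,True)}"])
      show "{(i,False),(i,True)} \<in> diag_matching r \<and> u \<in> {(i,False),(i,True)}"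
        using u unfolding diag_matching_def by (cases b) auto
      fix e assume "e \<in> diag_matching r \<and> u \<in> e"
      then show "e = {(i,False),(i,True)}" using u unfolding diag_matching_def by auto
    qed
  qed
qed

definition model_graph ::
    "nat \<Rightarrow> nat \<Rightarrow> nat \<Rightarrow> ((nat \<times> nat) + (nat \<times> nat \<times> bool)) graph" where
  "model_graph g h r = disj_union (copies g (complete_graph (r + 1)))
                          (copies h (delete_edges (complete_bipartite (r + 1)) (diag_matching r)))"

lemma mem_verts_model_graph:
  "Inl (c, i) \<in> verts (model_graph g h r) \<longleftrightarrow> c < g \<and> i < r + 1"
  "Inr (d, i, b) \<in> verts (model_graph g h r) \<longleftrightarrow> d < h \<and> i < r + 1"
  unfolding model_graph_def disj_union_def copies_def verts_def complete_graph_def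
    delete_edges_def complete_bipartite_def
  by auto

lemma verts_model_graph:
  "verts (model_graph g h r) = Inl ` ({..<g} \<times> {..<r+1})
     \<union> (\<lambda>(d,i). Inr (d,(i,False))) ` ({..<h} \<times> {..<r+1})
     \<union> (\<lambda>(d,i). Inr (d,(i,True))) ` ({..<h} \<times> {..<r+1})"
proof -
  have "verts (model_graph g h r) = Inl ` ({..<g} \<times> {..<r+1}) \<union> Inr ` ({..<h} \<times> ({..<r+1} \<times> UNIV))"
    unfolding model_graph_def disj_union_def copies_def verts_def complete_graph_def delete_edges_def complete_bipartite_def
    by simp
  also have "Inr ` ({..<h} \<times> ({..<r+1} \<times> UNIV))
      = (\<lambda>(d,i). Inr (d,(i,False))) ` ({..<h} \<times> {..<r+1})
        \<union> (\<lambda>(d,i). Inr (d,(i,True))) ` ({..<h} \<times> {..<r+1})"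
    by (auto simp: image_iff)
  finally show ?thesis by (simp add: Un_assoc)
qed

lemma adj_model_graph:
  "adj (model_graph g h r) (Inl (c,i)) (Inl (c',j))
     \<longleftrightarrow> c < g \<and> c' < g \<and> i < r+1 \<and> j < r+1 \<and> c = c' \<and> i \<noteq> j"
  "\<not> adj (model_graph g h r) (Inl x) (Inr y)"
  "\<not> adj (model_graph g h r) (Inr y) (Inl x)"
  "adj (model_graph g h r) (Inr (d,(i,b))) (Inr (d',(j,b')))
     \<longleftrightarrow> d < h \<and> d' < h \<and> i < r+1 \<and> j < r+1 \<and> d = d' \<and> b \<noteq> b' \<and> i \<noteq> j"
proof -
  show "adj (model_graph g h r) (Inl (c,i)) (Inl (c',j))
      \<longleftrightarrow> c < g \<and> c' < g \<and> i < r+1 \<and> j < r+1 \<and> c = c' \<and> i \<noteq> j"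
    unfolding model_graph_def disj_union_def copies_def verts_def complete_graph_def adj_def by auto
  show "\<not> adj (model_graph g h r) (Inl x) (Inr y)" "\<not> adj (model_graph g h r) (Inr y) (Inl x)"
    unfolding model_graph_def disj_union_def adj_def by auto
  have F: "b \<noteq> b' \<Longrightarrow> ({(i,b),(j,b')} \<in> diag_matching r) \<longleftrightarrow> (i = j \<and> i < r + 1)"
    unfolding diag_matching_def by (cases b; cases b') (auto simp: doubleton_eq_iff)
  show "adj (model_graph g h r) (Inr (d,(i,b))) (Inr (d',(j,b')))
      \<longleftrightarrow> d < h \<and> d' < h \<and> i < r+1 \<and> j < r+1 \<and> d = d' \<and> b \<noteq> b' \<and> i \<noteq> j"
    unfolding model_graph_def disj_union_def copies_def verts_def complete_bipartite_def
      delete_edges_def adj_def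
    using F by auto
qed

section \<open>Regular graphs with adjacency eigenvalues in \<open>{\<plusminus>1, \<plusminus>r}\<close>\<close>

text \<open>The last assumption is \<open>(A\<^sup>2 - I)(A\<^sup>2 - r\<^sup>2 I) = 0\<close> for the adjacency matrix \<open>A\<close>,
  written on the entries of \<open>A\<^sup>2\<close>, which count common neighbours.\<close>

locale quartic_regular_graph =
  fixes G :: "nat graph" and n r :: nat
  assumes simple: "simple_graph G" and verts_eq: "verts G = {..<n}" and r_ge_2: "r \<ge> 2"
    and reg: "regular G r"
    and quartic: "\<And>u v. u < n \<Longrightarrow> v < n \<Longrightarrow>
      (\<Sum>w<n. real (common_nbrs G n u w) * real (common_nbrs G n w v)) =
        (real r ^ 2 + 1) * real (common_nbrs G n u v) - (if u = v then real r ^ 2 else 0)"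
begin

abbreviation \<mu> where "\<mu> \<equiv> common_nbrs G n"

definition nbhd where "nbhd u = {v. v < n \<and> adj G u v}"

lemma adj_verts: "adj G u v \<Longrightarrow> u < n \<and> v < n"
  using verts_eq unfolding adj_def verts_def by auto

lemma adj_sym: "adj G u v \<Longrightarrow> adj G v u"
  using simple unfolding simple_graph_def by blast

lemma adj_irrefl: "\<not> adj G u u"
  using simple unfolding simple_graph_def by blast

lemma finite_nbhd [simp]: "finite (nbhd u)"
  unfolding nbhd_def by simp

lemma card_nbhd: "u < n \<Longrightarrow> card (nbhd u) = r"
  using reg verts_eq unfolding regular_def degree_def nbhd_def by auto

lemma mu_sym: "\<mu> u v = \<mu> v u"
  unfolding common_nbrs_def by (metis adj_sym)

lemma mu_self: "u < n \<Longrightarrow> \<mu> u u = r"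
  using common_nbrs_self[OF simple verts_eq] reg verts_eq unfolding regular_def by auto

lemma sum_adj:
  assumes "u < n"
  shows "(\<Sum>v<n. of_bool (adj G u v) :: real) = real r"
proof -
  have "{..<n} \<inter> {v. adj G u v} = nbhd u" unfolding nbhd_def by auto
  with assms show ?thesis by (simp add: card_nbhd)
qed

lemma sum_mu:
  assumes u: "u < n"
  shows "(\<Sum>v<n. real (\<mu> u v)) = real r ^ 2"
proof -
  have "(\<Sum>v<n. real (\<mu> u v)) = (\<Sum>w<n. of_bool (adj G u w) * (\<Sum>v<n. of_bool (adj G w v)))"
    by (simp only: common_nbrs_eq_sum sum_distrib_left) (rule sum.swap)
  also have "\<dots> = (\<Sum>w<n. of_bool (adj G u w) * real r)"
    by (rule sum.cong[OF refl], subst sum_adj) auto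
  also have "\<dots> = real r ^ 2"
    using sum_adj[OF u] by (simp only: sum_distrib_right[symmetric] power2_eq_square)
  finally show ?thesis .
qed

lemma sum_mu_square:
  assumes u: "u < n"
  shows "(\<Sum>v<n. real (\<mu> u v) ^ 2) = real r ^ 3 - real r ^ 2 + real r"
proof -
  have "(\<Sum>v<n. real (\<mu> u v) ^ 2) = (\<Sum>w<n. real (\<mu> u w) * real (\<mu> w u))"
    by (simp add: power2_eq_square mu_sym)
  also have "\<dots> = (real r ^ 2 + 1) * real r - real r ^ 2"
    using quartic[OF u u] mu_self[OF u] by simp
  finally show ?thesis
    by (simp add: algebra_simps power3_eq_cube power2_eq_square)
qed

text \<open>With \<open>2 \<mu> u w \<mu> v w \<le> \<mu> u w\<^sup>2 + \<mu> v w\<^sup>2\<close> the quartic identity gives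
  \<open>(r\<^sup>2 + 1) \<mu> u v \<le> r\<^sup>3 - r\<^sup>2 + r\<close>.\<close>

lemma mu_less:
  assumes u: "u < n" and v: "v < n" and uv: "u \<noteq> v"
  shows "\<mu> u v < r"
proof -
  have "(real r ^ 2 + 1) * real (\<mu> u v) = (\<Sum>w<n. real (\<mu> u w) * real (\<mu> w v))"
    using quartic[OF u v] uv by simp
  also have "\<dots> \<le> (\<Sum>w<n. (real (\<mu> u w) ^ 2 + real (\<mu> v w) ^ 2) / 2)"
  proof (rule sum_mono)
    fix w
    have "0 \<le> (real (\<mu> u w) - real (\<mu> v w)) ^ 2" by simp
    then show "real (\<mu> u w) * real (\<mu> w v) \<le> (real (\<mu> u w) ^ 2 + real (\<mu> v w) ^ 2) / 2"
      by (simp add: mu_sym[of w v] power2_eq_square algebra_simps)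
  qed
  also have "\<dots> = real r ^ 3 - real r ^ 2 + real r"
    using sum_mu_square[OF u] sum_mu_square[OF v]
    by (simp add: sum.distrib sum_divide_distrib[symmetric] add_divide_distrib)
  also have "\<dots> < (real r ^ 2 + 1) * real r"
    using r_ge_2 by (simp add: power2_eq_square power3_eq_cube algebra_simps)
  finally have "real (\<mu> u v) < real r"
    by (smt (verit) mult_left_mono zero_le_power2)
  then show ?thesis by simp
qed

lemma mu_pos_imp_path: "0 < \<mu> u v \<Longrightarrow> \<exists>w. adj G u w \<and> adj G w v"
  unfolding common_nbrs_def by (metis (mono_tags, lifting) card.empty empty_Collect_eq less_irrefl)

lemma mu_pos_imp_verts: "0 < \<mu> u v \<Longrightarrow> u < n \<and> v < n"
  using mu_pos_imp_path adj_verts by blast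

lemma mu_pos_if_common_nbr:
  assumes "adj G w x" "adj G w y"
  shows "0 < \<mu> x y"
proof -
  have "w \<in> {w. w < n \<and> adj G x w \<and> adj G w y}"
    using assms adj_verts adj_sym by blast
  moreover have "finite {w. w < n \<and> adj G x w \<and> adj G w y}" by simp
  ultimately show ?thesis
    unfolding common_nbrs_def by (subst card_gt_0_iff) blast
qed

text \<open>The terms \<open>\<mu> u x (r - 1 - \<mu> u x)\<close>, \<open>x \<noteq> u\<close>, are non-negative by \<open>mu_less\<close> and sum to
  \<open>0\<close> by the two moment identities.\<close>

lemma mu_cases:
  assumes u: "u < n" and v: "v < n" and uv: "u \<noteq> v"
  shows "\<mu> u v = 0 \<or> \<mu> u v = r - 1"
proof -
  define f where "f x = real (\<mu> u x) * (real r - 1 - real (\<mu> u x))" for x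
  have "(\<Sum>x<n. f x) = (real r - 1) * (\<Sum>x<n. real (\<mu> u x)) - (\<Sum>x<n. real (\<mu> u x) ^ 2)"
    unfolding f_def
    by (simp add: algebra_simps power2_eq_square sum_subtractf sum_distrib_left sum.distrib)
  also have "\<dots> = - real r"
    using sum_mu[OF u] sum_mu_square[OF u] by (simp add: algebra_simps power2_eq_square power3_eq_cube)
  also have "\<dots> = f u"
    unfolding f_def using mu_self[OF u] by simp
  finally have "(\<Sum>x\<in>{..<n} - {u}. f x) = 0"
    using u by (simp add: sum.remove)
  moreover have "\<forall>x\<in>{..<n} - {u}. 0 \<le> f x"
  proof
    fix x assume "x \<in> {..<n} - {u}"
    then have "\<mu> u x < r"
      using mu_less[OF u] by auto
    then have "real (\<mu> u x) \<le> real r - 1"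
      by linarith
    then show "0 \<le> f x" unfolding f_def by simp
  qed
  ultimately have "f v = 0"
    using sum_nonneg_eq_0_iff[of "{..<n} - {u}" f] v uv by auto
  then show ?thesis
    using r_ge_2 by (auto simp: f_def)
qed

definition block where "block u = {v. v < n \<and> 0 < \<mu> u v}"

lemma finite_block [simp]: "finite (block u)"
  unfolding block_def by simp

lemma block_subset: "block u \<subseteq> {..<n}"
  unfolding block_def by auto

lemma self_in_block: "u < n \<Longrightarrow> u \<in> block u"
  unfolding block_def using mu_self r_ge_2 by auto

lemma block_sym: "v \<in> block u \<Longrightarrow> u \<in> block v"
  unfolding block_def using mu_sym mu_pos_imp_verts by auto

lemma mu_in_block:
  assumes "v \<in> block u" "u \<noteq> v"
  shows "\<mu> u v = r - 1"
proof -
  have p: "0 < \<mu> u v" using assms(1) unfolding block_def by simp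
  then have "u < n" "v < n" using mu_pos_imp_verts by auto
  then show ?thesis using mu_cases assms(2) p by fastforce
qed

lemma block_trans:
  assumes "v \<in> block u" "w \<in> block v"
  shows "w \<in> block u"
proof -
  have u: "u < n" and v: "v < n" and w: "w < n" and p1: "0 < \<mu> u v" and p2: "0 < \<mu> v w"
    using assms mu_pos_imp_verts unfolding block_def by auto
  show "w \<in> block u"
  proof (cases "u = w")
    case True
    then show ?thesis using self_in_block u by simp
  next
    case False
    have "real (\<mu> u v) * real (\<mu> v w) \<le> (\<Sum>x<n. real (\<mu> u x) * real (\<mu> x w))"
      by (rule member_le_sum) (use v in auto)
    also have "\<dots> = (real r ^ 2 + 1) * real (\<mu> u w)" using quartic[OF u w] False by simp
    finally have "0 < (real r ^ 2 + 1) * real (\<mu> u w)" using p1 p2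
      by (smt (verit) of_nat_0_less_iff mult_pos_pos)
    then have "0 < \<mu> u w" by (simp add: zero_less_mult_iff)
    then show ?thesis using w unfolding block_def by simp
  qed
qed

lemma block_eq: "v \<in> block u \<Longrightarrow> block v = block u"
  using block_trans block_sym by blast

lemma block_eq_if_common: "x \<in> block u \<Longrightarrow> x \<in> block v \<Longrightarrow> block u = block v"
  using block_eq by metis

lemma common_nbr_in_block: "adj G w x \<Longrightarrow> adj G w y \<Longrightarrow> y \<in> block x"
  unfolding block_def using mu_pos_if_common_nbr adj_verts by blast

lemma card_block:
  assumes u: "u < n"
  shows "card (block u) = r + 1"
proof -
  have "(\<Sum>v<n. real (\<mu> u v)) = (\<Sum>v\<in>block u. real (\<mu> u v))"
    by (rule sum.mono_neutral_right) (use block_subset in \<open>auto simp: block_def\<close>)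
  also have "\<dots> = real (\<mu> u u) + (\<Sum>v\<in>block u - {u}. real (\<mu> u v))"
    using self_in_block[OF u] by (simp add: sum.remove)
  also have "(\<Sum>v\<in>block u - {u}. real (\<mu> u v)) = (\<Sum>v\<in>block u - {u}. real r - 1)"
    by (rule sum.cong) (use mu_in_block r_ge_2 in auto)
  finally have "real r ^ 2 = real r + real (card (block u - {u})) * (real r - 1)"
    using sum_mu[OF u] mu_self[OF u] by simp
  then have "(real r - 1) * (real (card (block u - {u})) - real r) = 0"
    by (simp add: algebra_simps power2_eq_square)
  then have "card (block u - {u}) = r" using r_ge_2 by simp
  then show ?thesis using card.remove[OF finite_block self_in_block[OF u]] by simp
qed

lemma ex_nbr:
  assumes u: "u < n"
  shows "\<exists>v. adj G u v"
proof -
  have "card (nbhd u) > 0" using card_nbhd[OF u] r_ge_2 by simp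
  then obtain v where "v \<in> nbhd u" by (metis card_gt_0_iff ex_in_conv)
  then show ?thesis unfolding nbhd_def by auto
qed

text \<open>Two neighbours of \<open>u\<close> have the common neighbour \<open>u\<close>, so all neighbours of \<open>u\<close> lie in
  a single block.\<close>

definition nbr_block where "nbr_block u = block (SOME v. adj G u v)"

lemma nbr_block_eq:
  assumes u: "u < n" and a: "adj G u v"
  shows "nbr_block u = block v"
proof -
  let ?v0 = "SOME v. adj G u v"
  have a0: "adj G u ?v0" using ex_nbr[OF u] by (rule someI_ex)
  have "v \<in> block ?v0" using common_nbr_in_block[OF a0 a] .
  then show ?thesis unfolding nbr_block_def using block_eq by simp
qed

lemma nbhd_subset_nbr_block:
  assumes u: "u < n"
  shows "nbhd u \<subseteq> nbr_block u"
proof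
  fix v assume "v \<in> nbhd u"
  then have a: "adj G u v" unfolding nbhd_def by simp
  then show "v \<in> nbr_block u" using nbr_block_eq[OF u a] self_in_block adj_verts by auto
qed

lemma nbr_block_is_block: "u < n \<Longrightarrow> \<exists>v. v < n \<and> nbr_block u = block v"
  using ex_nbr nbr_block_eq adj_verts by blast

lemma nbr_block_subset: "u < n \<Longrightarrow> nbr_block u \<subseteq> {..<n}"
  using nbr_block_is_block block_subset by metis

lemma card_nbr_block: "u < n \<Longrightarrow> card (nbr_block u) = r + 1"
  using nbr_block_is_block card_block by metis

lemma finite_nbr_block [simp]: "u < n \<Longrightarrow> finite (nbr_block u)"
  using nbr_block_is_block finite_block by metis

lemma nbr_block_block:
  assumes u: "u < n" and x: "x \<in> block u"
  shows "nbr_block x = nbr_block u"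
proof (cases "x = u")
  case False
  have "0 < \<mu> u x" using x unfolding block_def by simp
  then obtain w where w: "adj G u w" "adj G w x" using mu_pos_imp_path by blast
  have xn: "x < n" using w adj_verts by blast
  show ?thesis using nbr_block_eq[OF u w(1)] nbr_block_eq[OF xn adj_sym[OF w(2)]] by simp
qed simp

lemma nbr_block_nbr_block:
  assumes u: "u < n" and y: "y \<in> nbr_block u"
  shows "nbr_block y = block u"
proof -
  obtain v where a: "adj G u v" using ex_nbr[OF u] by blast
  have vn: "v < n" using a adj_verts by blast
  have "y \<in> block v" using y nbr_block_eq[OF u a] by simp
  then have "nbr_block y = nbr_block v" using nbr_block_block[OF vn] by simp
  also have "\<dots> = block u" using nbr_block_eq[OF vn adj_sym[OF a]] .
  finally show ?thesis .
qed

lemma block_nbr_block: "u < n \<Longrightarrow> y \<in> nbr_block u \<Longrightarrow> block y = nbr_block u"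
  using nbr_block_is_block block_eq by metis

lemma nbhd_clique:
  assumes u: "u < n" and c: "nbr_block u = block u"
  shows "nbhd u = block u - {u}"
proof -
  have sub: "nbhd u \<subseteq> block u - {u}"
    using nbhd_subset_nbr_block[OF u] c adj_irrefl unfolding nbhd_def by auto
  have "card (block u - {u}) = r" using card_block[OF u] self_in_block[OF u] by simp
  then show ?thesis using card_subset_eq[OF _ sub] card_nbhd[OF u] by simp
qed

lemma nbr_block_disjoint:
  assumes u: "u < n" and c: "nbr_block u \<noteq> block u"
  shows "nbr_block u \<inter> block u = {}"
proof -
  obtain v where "nbr_block u = block v" using nbr_block_is_block[OF u] by blast
  then show ?thesis using c block_eq_if_common by blast
qed

text \<open>Otherwise \<open>u\<close> has \<open>r\<close> neighbours in the \<open>r + 1\<close> vertices of its neighbour block and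
  misses exactly one of them, its mate.\<close>

definition mate where "mate u = the_elem (nbr_block u - nbhd u)"

lemma nbr_block_diff_nbhd:
  assumes u: "u < n" and c: "nbr_block u \<noteq> block u"
  shows "nbr_block u - nbhd u = {mate u}"
proof -
  have "card (nbr_block u - nbhd u) = card (nbr_block u) - card (nbhd u)"
    using nbhd_subset_nbr_block[OF u] by (simp add: card_Diff_subset)
  then have "card (nbr_block u - nbhd u) = 1"
    using card_nbr_block[OF u] card_nbhd[OF u] by simp
  then obtain z where "nbr_block u - nbhd u = {z}" using card_1_singletonE by blast
  then show ?thesis unfolding mate_def by simp
qed

lemma adj_iff_nonclique:
  assumes u: "u < n" and c: "nbr_block u \<noteq> block u"
  shows "adj G u y \<longleftrightarrow> y \<in> nbr_block u \<and> y \<noteq> mate u"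
proof -
  have "y \<in> nbhd u \<longleftrightarrow> y \<in> nbr_block u \<and> y \<noteq> mate u"
    using nbr_block_diff_nbhd[OF u c] nbhd_subset_nbr_block[OF u] by blast
  then show ?thesis unfolding nbhd_def using adj_verts by blast
qed

lemma adj_iff_clique:
  assumes u: "u < n" and c: "nbr_block u = block u"
  shows "adj G u y \<longleftrightarrow> y \<in> block u \<and> y \<noteq> u"
  using nbhd_clique[OF u c] adj_verts unfolding nbhd_def by blast

lemma mate_in_nbr_block: "u < n \<Longrightarrow> nbr_block u \<noteq> block u \<Longrightarrow> mate u \<in> nbr_block u"
  using nbr_block_diff_nbhd by blast

lemma mate_less: "u < n \<Longrightarrow> nbr_block u \<noteq> block u \<Longrightarrow> mate u < n"
  using mate_in_nbr_block nbr_block_subset by blast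

lemma block_mate: "u < n \<Longrightarrow> nbr_block u \<noteq> block u \<Longrightarrow> block (mate u) = nbr_block u"
  using block_nbr_block mate_in_nbr_block by blast

lemma nbr_block_mate: "u < n \<Longrightarrow> nbr_block u \<noteq> block u \<Longrightarrow> nbr_block (mate u) = block u"
  using nbr_block_nbr_block mate_in_nbr_block by blast

lemma mate_mate:
  assumes u: "u < n" and c: "nbr_block u \<noteq> block u"
  shows "mate (mate u) = u"
proof -
  have pn: "mate u < n" and c2: "nbr_block (mate u) \<noteq> block (mate u)"
    using mate_less[OF u c] block_mate[OF u c] nbr_block_mate[OF u c] c by auto
  have "\<not> adj G u (mate u)" using adj_iff_nonclique[OF u c] by simp
  then have "\<not> adj G (mate u) u" using adj_sym by blast
  moreover have "u \<in> nbr_block (mate u)" using nbr_block_mate[OF u c] self_in_block[OF u] by simp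
  ultimately show ?thesis using adj_iff_nonclique[OF pn c2, of u] by auto
qed

lemma Min_nbr_block_neq:
  assumes u: "u < n" and c: "nbr_block u \<noteq> block u"
  shows "Min (nbr_block u) \<noteq> Min (block u)"
proof -
  have "block u \<noteq> {}" using self_in_block[OF u] by blast
  moreover have "nbr_block u \<noteq> {}" using card_nbr_block[OF u] by auto
  ultimately have "Min (nbr_block u) \<in> nbr_block u" "Min (block u) \<in> block u"
    using finite_nbr_block[OF u] by auto
  then show ?thesis using nbr_block_disjoint[OF u c] by auto
qed

text \<open>A vertex whose neighbour block is a different block lies in a copy of K_{r+1,r+1}
  minus a perfect matching; its side is fixed by comparing the least vertices of the two blocks.\<close>

definition clique_verts where "clique_verts = {u. u < n \<and> nbr_block u = block u}"

definition left_verts where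
  "left_verts = {u. u < n \<and> nbr_block u \<noteq> block u \<and> Min (block u) < Min (nbr_block u)}"

definition right_verts where
  "right_verts = {u. u < n \<and> nbr_block u \<noteq> block u \<and> Min (nbr_block u) < Min (block u)}"

lemma verts_partition:
  "{..<n} = clique_verts \<union> left_verts \<union> right_verts" "clique_verts \<inter> left_verts = {}"
  "clique_verts \<inter> right_verts = {}" "left_verts \<inter> right_verts = {}"
  unfolding clique_verts_def left_verts_def right_verts_def using Min_nbr_block_neq
  by (auto simp: linorder_neq_iff)

lemma mate_left: "u \<in> left_verts \<Longrightarrow> mate u \<in> right_verts"
  unfolding left_verts_def right_verts_def using mate_less block_mate nbr_block_mate by auto

lemma mate_right: "u \<in> right_verts \<Longrightarrow> mate u \<in> left_verts"
  unfolding left_verts_def right_verts_def using mate_less block_mate nbr_block_mate by auto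

lemma bij_betw_mate: "bij_betw mate left_verts right_verts"
proof (rule bij_betw_byWitness[of _ mate])
  show "\<forall>a\<in>left_verts. mate (mate a) = a" using mate_mate unfolding left_verts_def by auto
  show "\<forall>a\<in>right_verts. mate (mate a) = a" using mate_mate unfolding right_verts_def by auto
  show "mate ` left_verts \<subseteq> right_verts" using mate_left by auto
  show "mate ` right_verts \<subseteq> left_verts" using mate_right by auto
qed

lemma clique_verts_closed:
  assumes u: "u \<in> clique_verts" and x: "x \<in> block u"
  shows "x \<in> clique_verts"
proof -
  have un: "u < n" and c: "nbr_block u = block u" using u unfolding clique_verts_def by auto
  have "nbr_block x = block x" using nbr_block_block[OF un x] c block_eq[OF x] by simp
  then show ?thesis using x block_subset unfolding clique_verts_def by auto
qed

lemma left_verts_closed: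
  assumes u: "u \<in> left_verts" and x: "x \<in> block u"
  shows "x \<in> left_verts"
proof -
  have un: "u < n" using u unfolding left_verts_def by auto
  have "nbr_block x = nbr_block u" "block x = block u"
    using nbr_block_block[OF un x] block_eq[OF x] by auto
  then show ?thesis using u x block_subset unfolding left_verts_def by auto
qed

lemma sum_mu_nbhd:
  assumes u: "u < n"
  shows "(\<Sum>v\<in>nbhd u. real (\<mu> u v)) = (if u \<in> clique_verts then real r * (real r - 1) else 0)"
proof (cases "u \<in> clique_verts")
  case True
  then have c: "nbr_block u = block u" unfolding clique_verts_def by simp
  have "(\<Sum>v\<in>nbhd u. real (\<mu> u v)) = (\<Sum>v\<in>nbhd u. real r - 1)"
    by (rule sum.cong) (use nbhd_clique[OF u c] mu_in_block r_ge_2 in auto)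
  then show ?thesis using True card_nbhd[OF u] by simp
next
  case False
  then have c: "nbr_block u \<noteq> block u" using u unfolding clique_verts_def by simp
  have "(\<Sum>v\<in>nbhd u. real (\<mu> u v)) = (\<Sum>v\<in>nbhd u. 0)"
  proof (rule sum.cong, simp)
    fix v assume v: "v \<in> nbhd u"
    then have "v \<in> nbr_block u" "v < n" using nbhd_subset_nbr_block[OF u] unfolding nbhd_def by auto
    then have "v \<notin> block u" using nbr_block_disjoint[OF u c] by auto
    then show "real (\<mu> u v) = 0" using \<open>v < n\<close> unfolding block_def by simp
  qed
  then show ?thesis using False by simp
qed

lemma sum_mu_adj:
  "(\<Sum>u<n. \<Sum>v<n. real (\<mu> u v) * of_bool (adj G v u))
    = real r * (real r - 1) * real (card clique_verts)"
proof -
  have "(\<Sum>v<n. real (\<mu> u v) * of_bool (adj G v u)) = (\<Sum>v\<in>nbhd u. real (\<mu> u v))" for u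
  proof -
    have "(\<Sum>v<n. real (\<mu> u v) * of_bool (adj G v u))
        = (\<Sum>v\<in>{..<n}. if v \<in> nbhd u then real (\<mu> u v) else 0)"
      by (rule sum.cong) (auto simp: of_bool_def nbhd_def adj_sym)
    also have "\<dots> = (\<Sum>v\<in>nbhd u. real (\<mu> u v))"
      by (subst sum.If_cases) (auto simp: nbhd_def intro!: sum.cong)
    finally show ?thesis .
  qed
  then have "(\<Sum>u<n. \<Sum>v<n. real (\<mu> u v) * of_bool (adj G v u))
      = (\<Sum>u<n. if u \<in> clique_verts then real r * (real r - 1) else 0)"
    using sum_mu_nbhd by simp
  also have "\<dots> = real r * (real r - 1) * real (card clique_verts)"
  proof -
    have "clique_verts \<subseteq> {..<n}" unfolding clique_verts_def by auto
    then have "{..<n} \<inter> clique_verts = clique_verts" by auto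
    then show ?thesis by (simp add: sum.If_cases)
  qed
  finally show ?thesis .
qed

lemma adj_clique: "x \<in> clique_verts \<Longrightarrow> adj G x y \<longleftrightarrow> y \<in> block x \<and> y \<noteq> x"
  using adj_iff_clique unfolding clique_verts_def by auto

lemma not_adj_clique: "x \<in> clique_verts \<Longrightarrow> y \<notin> clique_verts \<Longrightarrow> \<not> adj G x y"
  using adj_clique clique_verts_closed by blast

lemma adj_left:
  assumes x: "x \<in> left_verts" and a: "adj G x y"
  shows "y \<in> right_verts"
proof -
  have xn: "x < n" and c: "nbr_block x \<noteq> block x" and mi: "Min (block x) < Min (nbr_block x)"
    using x unfolding left_verts_def by auto
  have y: "y \<in> nbr_block x" using adj_iff_nonclique[OF xn c] a by blast
  have "block y = nbr_block x" "nbr_block y = block x"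
    using block_nbr_block[OF xn y] nbr_block_nbr_block[OF xn y] by auto
  then show ?thesis using c mi y nbr_block_subset[OF xn] unfolding right_verts_def by auto
qed

lemma adj_right:
  assumes x: "x \<in> right_verts" and a: "adj G x y"
  shows "y \<in> left_verts"
proof -
  have xn: "x < n" and c: "nbr_block x \<noteq> block x" and mi: "Min (nbr_block x) < Min (block x)"
    using x unfolding right_verts_def by auto
  have y: "y \<in> nbr_block x" using adj_iff_nonclique[OF xn c] a by blast
  have "block y = nbr_block x" "nbr_block y = block x"
    using block_nbr_block[OF xn y] nbr_block_nbr_block[OF xn y] by auto
  then show ?thesis using c mi y nbr_block_subset[OF xn] unfolding left_verts_def by auto
qed

lemma adj_left_mate:
  assumes x: "x \<in> left_verts" and x': "x' \<in> left_verts"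
  shows "adj G x (mate x') \<longleftrightarrow> block x = block x' \<and> x \<noteq> x'"
proof -
  have xn: "x < n" and c: "nbr_block x \<noteq> block x" and xn': "x' < n" and c': "nbr_block x' \<noteq> block x'"
    using x x' unfolding left_verts_def by auto
  show ?thesis
  proof
    assume "adj G x (mate x')"
    then have "mate x' \<in> nbr_block x" "mate x' \<noteq> mate x" using adj_iff_nonclique[OF xn c] by auto
    then have "block x = block x'" using nbr_block_nbr_block[OF xn] nbr_block_mate[OF xn' c'] by metis
    moreover have "x \<noteq> x'" using \<open>mate x' \<noteq> mate x\<close> by auto
    ultimately show "block x = block x' \<and> x \<noteq> x'" by simp
  next
    assume a: "block x = block x' \<and> x \<noteq> x'"
    then have "x' \<in> block x" using self_in_block[OF xn'] by simp
    then have "nbr_block x' = nbr_block x" using nbr_block_block[OF xn] by simp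
    then have "mate x' \<in> nbr_block x" using mate_in_nbr_block[OF xn' c'] by simp
    moreover have "mate x' \<noteq> mate x" using a mate_mate[OF xn c] mate_mate[OF xn' c'] by metis
    ultimately show "adj G x (mate x')" using adj_iff_nonclique[OF xn c] by auto
  qed
qed

definition block_closed :: "nat set \<Rightarrow> bool" where
  "block_closed S \<longleftrightarrow> S \<subseteq> {..<n} \<and> (\<forall>u \<in> S. block u \<subseteq> S)"

lemma block_closed_clique_verts: "block_closed clique_verts"
proof -
  have "clique_verts \<subseteq> {..<n}" unfolding clique_verts_def by auto
  then show ?thesis unfolding block_closed_def using clique_verts_closed by blast
qed

lemma block_closed_left_verts: "block_closed left_verts"
proof -
  have "left_verts \<subseteq> {..<n}" unfolding left_verts_def by auto
  then show ?thesis unfolding block_closed_def using left_verts_closed by blast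
qed

lemma bij_betw_enum_blocks:
  assumes "block_closed S"
  shows "bij_betw (enum_partition (block ` S)) ({..<card (block ` S)} \<times> {..<r + 1}) S"
proof -
  have S: "S \<subseteq> {..<n}" using assms unfolding block_closed_def by blast
  have "\<Union>(block ` S) = S"
    using assms self_in_block unfolding block_closed_def by blast
  moreover have "bij_betw (enum_partition (block ` S)) ({..<card (block ` S)} \<times> {..<r + 1}) (\<Union>(block ` S))"
  proof (rule bij_betw_enum_partition)
    show "finite (block ` S)" using S finite_subset by blast
    show "finite X \<and> card X = r + 1" if "X \<in> block ` S" for X
      using that S card_block by auto
    show "disjoint (block ` S)"
    proof (rule disjointI)
      fix X Y assume "X \<in> block ` S" "Y \<in> block ` S" "X \<noteq> Y"
      then obtain u v where "X = block u" "Y = block v" "block u \<noteq> block v" by blast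
      then show "X \<inter> Y = {}" using block_eq_if_common[of _ u v] by blast
    qed
  qed
  ultimately show ?thesis by simp
qed

lemma block_enum_blocks:
  assumes "block_closed S" and "c < card (block ` S)" and "i < r + 1"
  shows "block (enum_partition (block ` S) (c, i)) = enum_set (block ` S) c"
proof -
  have S: "S \<subseteq> {..<n}" using assms unfolding block_closed_def by blast
  have fin: "finite (block ` S)" using S finite_subset by blast
  have card: "finite X \<and> card X = r + 1" if "X \<in> block ` S" for X
    using that S card_block by auto
  obtain u where "enum_set (block ` S) c = block u"
    using enum_partition_mem(1)[OF fin card assms(2,3)] by blast
  then show ?thesis
    using enum_partition_mem(2)[OF fin card assms(2,3)] block_eq by metis
qed

lemma enum_blocks_eq_iff:
  assumes "block_closed S" "c < card (block ` S)" "i < r + 1" "c' < card (block ` S)" "j < r + 1"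
  shows "enum_partition (block ` S) (c, i) = enum_partition (block ` S) (c', j) \<longleftrightarrow> c = c' \<and> i = j"
    and "block (enum_partition (block ` S) (c, i)) = block (enum_partition (block ` S) (c', j)) \<longleftrightarrow> c = c'"
proof -
  show "enum_partition (block ` S) (c, i) = enum_partition (block ` S) (c', j) \<longleftrightarrow> c = c' \<and> i = j"
    using bij_betw_imp_inj_on[OF bij_betw_enum_blocks[OF assms(1)]] assms(2-)
    by (simp add: inj_on_eq_iff)
  have "finite (block ` S)"
    using assms(1) finite_subset unfolding block_closed_def by blast
  then have "inj_on (enum_set (block ` S)) {..<card (block ` S)}"
    by (rule bij_betw_imp_inj_on[OF bij_betw_enum_set])
  then show "block (enum_partition (block ` S) (c, i)) = block (enum_partition (block ` S) (c', j)) \<longleftrightarrow> c = c'"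
    using assms by (simp add: block_enum_blocks inj_on_eq_iff)
qed

abbreviation clique_count where "clique_count \<equiv> card (block ` clique_verts)"
abbreviation bipartite_count where "bipartite_count \<equiv> card (block ` left_verts)"

text \<open>The vertex \<open>Inr (d, i, True)\<close> of the model graph goes to the mate of the image of
  \<open>Inr (d, i, False)\<close>; the deleted perfect matching consists of these pairs.\<close>

definition embed :: "(nat \<times> nat) + (nat \<times> nat \<times> bool) \<Rightarrow> nat" where
  "embed = case_sum (enum_partition (block ` clique_verts))
     (\<lambda>(d, i, b). if b then mate (enum_partition (block ` left_verts) (d, i))
                  else enum_partition (block ` left_verts) (d, i))"

lemma bij_betw_enum_right_verts:
  "bij_betw (\<lambda>p. mate (enum_partition (block ` left_verts) p))
     ({..<bipartite_count} \<times> {..<r + 1}) right_verts"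
  using bij_betw_trans[OF bij_betw_enum_blocks[OF block_closed_left_verts] bij_betw_mate]
  by (simp add: comp_def)

lemma bij_betw_embed: "bij_betw embed (verts (model_graph clique_count bipartite_count r)) {..<n}"
proof -
  have "bij_betw embed (Inl ` ({..<clique_count} \<times> {..<r + 1})) clique_verts"
    by (rule bij_betw_reindex[OF bij_betw_enum_blocks[OF block_closed_clique_verts]])
      (auto simp: embed_def)
  moreover have "bij_betw embed ((\<lambda>(d, i). Inr (d, i, False)) ` ({..<bipartite_count} \<times> {..<r + 1}))
      left_verts"
    by (rule bij_betw_reindex[OF bij_betw_enum_blocks[OF block_closed_left_verts]])
      (auto simp: embed_def inj_on_def)
  moreover have "bij_betw embed ((\<lambda>(d, i). Inr (d, i, True)) ` ({..<bipartite_count} \<times> {..<r + 1}))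
      right_verts"
    by (rule bij_betw_reindex[OF bij_betw_enum_right_verts]) (auto simp: embed_def inj_on_def)
  ultimately have "bij_betw embed (verts (model_graph clique_count bipartite_count r))
      (clique_verts \<union> left_verts \<union> right_verts)"
    unfolding verts_model_graph by (intro bij_betw_combine) (use verts_partition in auto)
  then show ?thesis using verts_partition(1) by simp
qed

lemma in_block_iff: "v < n \<Longrightarrow> v \<in> block u \<longleftrightarrow> block v = block u"
  using block_eq self_in_block by blast

lemma embed_mem:
  assumes "i < r + 1"
  shows "c < clique_count \<Longrightarrow> embed (Inl (c, i)) \<in> clique_verts"
    and "d < bipartite_count \<Longrightarrow> embed (Inr (d, i, False)) \<in> left_verts"
    and "d < bipartite_count \<Longrightarrow> embed (Inr (d, i, True)) \<in> right_verts"
  using assms bij_betw_apply[OF bij_betw_enum_blocks[OF block_closed_clique_verts]]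
    bij_betw_apply[OF bij_betw_enum_blocks[OF block_closed_left_verts]]
    bij_betw_apply[OF bij_betw_enum_right_verts]
  by (auto simp: embed_def)

lemma adj_embed_clique:
  assumes "c < clique_count" "i < r + 1" "c' < clique_count" "j < r + 1"
  shows "adj G (embed (Inl (c, i))) (embed (Inl (c', j))) \<longleftrightarrow> c = c' \<and> i \<noteq> j"
proof -
  let ?e = "enum_partition (block ` clique_verts)"
  note eq = enum_blocks_eq_iff[OF block_closed_clique_verts assms(3,4,1,2)]
  have x: "?e (c, i) \<in> clique_verts" and y: "?e (c', j) \<in> clique_verts"
    using embed_mem(1)[OF assms(2,1)] embed_mem(1)[OF assms(4,3)] by (simp_all add: embed_def)
  then have "?e (c', j) < n" unfolding clique_verts_def by simp
  then have "?e (c', j) \<in> block (?e (c, i)) \<longleftrightarrow> c' = c"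
    using in_block_iff eq(2) by simp
  then have "adj G (?e (c, i)) (?e (c', j)) \<longleftrightarrow> c' = c \<and> \<not> (c' = c \<and> j = i)"
    using adj_clique[OF x] eq(1) by simp
  then show ?thesis by (auto simp: embed_def)
qed

lemma adj_embed_left_right:
  assumes "d < bipartite_count" "i < r + 1" "d' < bipartite_count" "j < r + 1"
  shows "adj G (embed (Inr (d, i, False))) (embed (Inr (d', j, True))) \<longleftrightarrow> d = d' \<and> i \<noteq> j"
proof -
  have "embed (Inr (d, i, False)) \<in> left_verts" "embed (Inr (d', j, False)) \<in> left_verts"
    using embed_mem assms by auto
  from adj_left_mate[OF this] enum_blocks_eq_iff[OF block_closed_left_verts assms] show ?thesis
    by (auto simp: embed_def)
qed

lemma adj_embed_right_left:
  assumes "d < bipartite_count" "i < r + 1" "d' < bipartite_count" "j < r + 1"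
  shows "adj G (embed (Inr (d, i, True))) (embed (Inr (d', j, False))) \<longleftrightarrow> d = d' \<and> i \<noteq> j"
proof -
  have "adj G (embed (Inr (d, i, True))) (embed (Inr (d', j, False)))
      \<longleftrightarrow> adj G (embed (Inr (d', j, False))) (embed (Inr (d, i, True)))"
    by (intro iffI; erule adj_sym)
  with adj_embed_left_right[OF assms(3,4,1,2)] show ?thesis by auto
qed

lemma not_adj_embed_same_side:
  assumes "d < bipartite_count" "i < r + 1" "d' < bipartite_count" "j < r + 1"
  shows "\<not> adj G (embed (Inr (d, i, b))) (embed (Inr (d', j, b)))"
proof
  assume a: "adj G (embed (Inr (d, i, b))) (embed (Inr (d', j, b)))"
  show False
  proof (cases b)
    case True
    with a have "embed (Inr (d', j, True)) \<in> left_verts"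
      using adj_right embed_mem(3)[OF assms(2,1)] by simp
    then show False
      using embed_mem(3)[OF assms(4,3)] verts_partition(4) by auto
  next
    case False
    with a have "embed (Inr (d', j, False)) \<in> right_verts"
      using adj_left embed_mem(2)[OF assms(2,1)] by simp
    then show False
      using embed_mem(2)[OF assms(4,3)] verts_partition(4) by auto
  qed
qed

lemma adj_embed:
  assumes p: "p \<in> verts (model_graph clique_count bipartite_count r)"
    and q: "q \<in> verts (model_graph clique_count bipartite_count r)"
  shows "adj (model_graph clique_count bipartite_count r) p q \<longleftrightarrow> adj G (embed p) (embed q)"
proof -
  have disj: "x \<notin> clique_verts" "x \<notin> right_verts" if "x \<in> left_verts" for x
    using that verts_partition by auto
  have disj': "x \<notin> clique_verts" if "x \<in> right_verts" for x
    using that verts_partition by auto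
  consider (cc) c i c' j where "p = Inl (c, i)" "q = Inl (c', j)"
    | (cb) c i d j b where "p = Inl (c, i)" "q = Inr (d, j, b)"
    | (bc) d i b c j where "p = Inr (d, i, b)" "q = Inl (c, j)"
    | (bb) d i b d' j b' where "p = Inr (d, i, b)" "q = Inr (d', j, b')"
    by (cases p; cases q) (auto simp: split_paired_all)
  then show ?thesis
  proof cases
    case cc
    with p q have "c < clique_count" "i < r + 1" "c' < clique_count" "j < r + 1"
      by (simp_all add: mem_verts_model_graph)
    with cc show ?thesis
      by (simp add: adj_model_graph adj_embed_clique)
  next
    case cb
    with p q have "c < clique_count" "i < r + 1" "d < bipartite_count" "j < r + 1"
      by (simp_all add: mem_verts_model_graph)
    then have "embed p \<in> clique_verts" and "embed q \<notin> clique_verts"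
      using cb embed_mem disj disj' by (simp, cases b, simp_all)
    then show ?thesis
      using cb not_adj_clique by (simp add: adj_model_graph)
  next
    case bc
    with p q have "d < bipartite_count" "i < r + 1" "c < clique_count" "j < r + 1"
      by (simp_all add: mem_verts_model_graph)
    then have "embed q \<in> clique_verts" and "embed p \<notin> clique_verts"
      using bc embed_mem disj disj' by (simp, cases b, simp_all)
    then have "\<not> adj G (embed p) (embed q)"
      using not_adj_clique[of "embed q" "embed p"] adj_sym[of "embed p" "embed q"] by blast
    then show ?thesis
      using bc by (simp add: adj_model_graph)
  next
    case bb
    with p q have dj: "d < bipartite_count" "i < r + 1" "d' < bipartite_count" "j < r + 1"
      by (simp_all add: mem_verts_model_graph)
    then have "adj G (embed p) (embed q) \<longleftrightarrow> d = d' \<and> b \<noteq> b' \<and> i \<noteq> j"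
      using bb not_adj_embed_same_side[OF dj] adj_embed_left_right[OF dj] adj_embed_right_left[OF dj]
      by (cases b; cases b') simp_all
    then show ?thesis
      using bb dj by (simp add: adj_model_graph)
  qed
qed

lemma graph_iso_model_graph: "graph_iso G (model_graph clique_count bipartite_count r)"
proof (rule graph_iso_sym)
  have "\<forall>p \<in> verts (model_graph clique_count bipartite_count r).
      \<forall>q \<in> verts (model_graph clique_count bipartite_count r).
        adj (model_graph clique_count bipartite_count r) p q \<longleftrightarrow> adj G (embed p) (embed q)"
    by (intro ballI adj_embed)
  then show "graph_iso (model_graph clique_count bipartite_count r) G"
    unfolding graph_iso_def verts_eq by (intro exI[of _ embed] conjI bij_betw_embed)
qed

lemma card_clique_verts: "card clique_verts = clique_count * (r + 1)"
  using bij_betw_same_card[OF bij_betw_enum_blocks[OF block_closed_clique_verts]]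
  by (simp add: card_cartesian_product)

lemma n_eq_blocks: "n = (clique_count + 2 * bipartite_count) * (r + 1)"
proof -
  have "n = card (clique_verts \<union> left_verts \<union> right_verts)"
    using verts_partition(1) by (metis card_lessThan)
  also have "\<dots> = card clique_verts + card left_verts + card right_verts"
    using verts_partition
    by (simp add: card_Un_disjoint Int_Un_distrib2 clique_verts_def left_verts_def right_verts_def)
  also have "card left_verts = bipartite_count * (r + 1)"
    using bij_betw_same_card[OF bij_betw_enum_blocks[OF block_closed_left_verts]]
    by (simp add: card_cartesian_product)
  also have "card right_verts = bipartite_count * (r + 1)"
    using bij_betw_same_card[OF bij_betw_enum_right_verts] by (simp add: card_cartesian_product)
  finally show ?thesis
    by (simp add: card_clique_verts algebra_simps)
qed

lemma mat_trace_adj_mat_cube_eq: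
  "mat_trace (adj_mat G n ^\<^sub>m 3) = real r * (real r - 1) * (real r + 1) * real clique_count"
proof -
  have "mat_trace (adj_mat G n ^\<^sub>m 3) = real r * (real r - 1) * real (card clique_verts)"
    using mat_trace_adj_mat_cube sum_mu_adj by simp
  also have "real (card clique_verts) = (real r + 1) * real clique_count"
    by (simp add: card_clique_verts algebra_simps)
  finally show ?thesis by (simp only: ac_simps)
qed

end

lemma quartic_regular_graphI:
  assumes simple: "simple_graph G" and verts: "verts G = {..<n}" and r: "r \<ge> 2"
    and reg: "regular G r"
    and cp: "char_poly (adj_mat G n + real r \<cdot>\<^sub>m 1\<^sub>m n) = (\<Prod>e\<leftarrow>es. [:-e, 1:])"
    and eig: "\<And>e. e \<in> set es \<Longrightarrow> e - real r \<in> {1, -1, real r, - real r}"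
  shows "quartic_regular_graph G n r"
proof
  show "simple_graph G" "verts G = {..<n}" "r \<ge> 2" "regular G r" by fact+
  have "adj_mat G n ^\<^sub>m 4 + (- (real r ^ 2 + 1)) \<cdot>\<^sub>m adj_mat G n ^\<^sub>m 2 + real r ^ 2 \<cdot>\<^sub>m 1\<^sub>m n
      = 0\<^sub>m n n"
  proof (rule symmetric_mat_quartic_eq_0[OF adj_mat_carrier transpose_adj_mat[OF simple] cp])
    show "(e - real r) ^ 4 + - (real r ^ 2 + 1) * (e - real r) ^ 2 + real r ^ 2 = 0"
      if "e \<in> set es" for e
    proof -
      have "x ^ 4 + - (real r ^ 2 + 1) * x ^ 2 + real r ^ 2 = 0" if "x \<in> {1, -1, real r, - real r}"
        for x :: real
        using that by (auto simp: algebra_simps power2_eq_square power4_eq_xxxx)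
      with eig[OF \<open>e \<in> set es\<close>] show ?thesis by blast
    qed
  qed
  note zero = this
  show "(\<Sum>w<n. real (common_nbrs G n u w) * real (common_nbrs G n w v)) =
      (real r ^ 2 + 1) * real (common_nbrs G n u v) - (if u = v then real r ^ 2 else 0)"
    if "u < n" "v < n" for u v
  proof -
    have "(adj_mat G n ^\<^sub>m 4 + (- (real r ^ 2 + 1)) \<cdot>\<^sub>m adj_mat G n ^\<^sub>m 2 + real r ^ 2 \<cdot>\<^sub>m 1\<^sub>m n)
        $$ (u, v) = 0"
      using zero that by simp
    with that show ?thesis
      by (cases "u = v") (simp_all add: index_adj_mat_pow4 index_adj_mat_square algebra_simps)
  qed
qed

lemma sum_list_spectrum_shift:
  assumes "mset es = replicate_mset s' (2 * real r) + replicate_mset (s - s') 0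
      + replicate_mset a (real r + 1) + replicate_mset b (real r - 1)"
  shows "(\<Sum>e\<leftarrow>es. (e - real r) ^ k)
    = real s' * real r ^ k + real (s - s') * (- real r) ^ k + real a + real b * (-1) ^ k"
proof -
  have "(\<Sum>e\<leftarrow>es. (e - real r) ^ k) = (\<Sum>e\<in>#mset es. (e - real r) ^ k)"
    by (simp only: mset_map[symmetric] sum_mset_sum_list)
  then show ?thesis using assms by simp
qed

lemma spectrum_shift_cases:
  assumes "mset es = replicate_mset s' (2 * real r) + replicate_mset (s - s') 0
      + replicate_mset a (real r + 1) + replicate_mset b (real r - 1)"
    and "e \<in> set es"
  shows "e - real r \<in> {1, -1, real r, - real r}"
proof -
  have "e \<in># mset es" using assms(2) by simp
  then have "e = 2 * real r \<or> e = 0 \<or> e = real r + 1 \<or> e = real r - 1"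
    unfolding assms(1) by (auto split: if_splits)
  then show ?thesis by auto
qed

lemma trace_equations_solution:
  fixes n r a b s s' g h :: nat
  assumes r: "r \<ge> 2" and s: "s' < s" and n: "n = s + a + b" and n': "n = (g + 2 * h) * (r + 1)"
    and t1: "real s' * real r - real (s - s') * real r + real a - real b = 0"
    and t2: "real s' * real r ^ 2 + real (s - s') * real r ^ 2 + real a + real b = real n * real r"
    and t3: "real s' * real r ^ 3 - real (s - s') * real r ^ 3 + real a - real b
      = real r * (real r - 1) * (real r + 1) * real g"
  shows "s \<le> 2 * s' \<and> a = r * (s - s') \<and> b = r * s' \<and> real r = real n / real s - 1
    \<and> g = 2 * s' - s \<and> h = s - s'"
proof -
  have ss: "real (s - s') = real s - real s'" using s by simp
  have "real n * (real r - 1) = real s * (real r + 1) * (real r - 1)"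
    using t2 n ss by (simp add: algebra_simps power2_eq_square)
  then have ns: "real n = real s * (real r + 1)" using r by simp
  have ab: "real a - real b = real r * (real s - 2 * real s')"
    using t1 ss by (simp add: algebra_simps)
  have "real g * (real r * (real r - 1) * (real r + 1))
      = (2 * real s' - real s) * (real r * (real r - 1) * (real r + 1))"
    using t3 ab ss by (simp add: algebra_simps power3_eq_cube)
  then have g: "real g = 2 * real s' - real s" using r by simp
  have "real n = (real g + 2 * real h) * (real r + 1)"
    using n' by (simp add: algebra_simps)
  then have "(real g + 2 * real h) * (real r + 1) = real s * (real r + 1)"
    using ns by simp
  then have h: "real h = real s - real s'" using g r by simp
  have "real a + real b = real r * real s" using ns n by (simp add: algebra_simps)
  with ab have a: "real a = real r * (real s - real s')" and b: "real b = real r * real s'"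
    by (simp_all add: algebra_simps)
  from g have "s \<le> 2 * s'" by simp
  moreover have "a = r * (s - s')" using a ss by (metis of_nat_eq_iff of_nat_mult)
  moreover have "b = r * s'" using b by (metis of_nat_eq_iff of_nat_mult)
  moreover have "real r = real n / real s - 1" using ns s by (simp add: field_simps)
  moreover have "g = 2 * s' - s" using g \<open>s \<le> 2 * s'\<close> by (simp add: of_nat_diff)
  moreover have "h = s - s'" using h ss by simp
  ultimately show ?thesis by blast
qed

theorem mainTheorem4:
  fixes G :: "nat graph" and n r a b s s' :: nat
  assumes "simple_graph G"
    and "verts G = {..<n}"
    and "r \<ge> 2"
    and "regular G r"
    and "\<not> connected G"
    and "has_spectrum (signless_laplacian G n)
           (replicate_mset s' (2 * real r) + replicate_mset (s - s') 0
            + replicate_mset a (real r + 1) + replicate_mset b (real r - 1))"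
    and "n = s + a + b"
    and "s > s'" and "s' > 1"
  shows "s \<le> 2 * s' \<and> a = r * (s - s') \<and> b = r * s' \<and> real r = real n / real s - 1 \<and>
         (\<exists>F. perfect_matching (complete_bipartite (r + 1)) F \<and>
            graph_iso G
              (disj_union (copies (2 * s' - s) (complete_graph (r + 1)))
                          (copies (s - s') (delete_edges (complete_bipartite (r + 1)) F))))"
proof -
  note graph = assms(1-4)
  obtain es where es: "mset es = replicate_mset s' (2 * real r) + replicate_mset (s - s') 0
      + replicate_mset a (real r + 1) + replicate_mset b (real r - 1)"
    and "char_poly (signless_laplacian G n) = (\<Prod>e\<leftarrow>es. [:-e, 1:])"
    using char_poly_eq_prod_linear_factors[OF _ assms(6), of n] assms(7,8)
    by (auto simp: signless_laplacian_def)
  then have cp: "char_poly (adj_mat G n + real r \<cdot>\<^sub>m 1\<^sub>m n) = (\<Prod>e\<leftarrow>es. [:-e, 1:])"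
    by (simp add: signless_laplacian_eq_adj_mat[OF assms(1,2,4)])
  interpret quartic_regular_graph G n r
    using quartic_regular_graphI[OF graph cp spectrum_shift_cases[OF es]] .
  note trace = mat_trace_pow_eq_sum_eigenvalues[OF adj_mat_carrier cp,
      unfolded sum_list_spectrum_shift[OF es]]
  have "s \<le> 2 * s' \<and> a = r * (s - s') \<and> b = r * s' \<and> real r = real n / real s - 1
      \<and> clique_count = 2 * s' - s \<and> bipartite_count = s - s'"
    using trace[of 1] trace[of 2] trace[of 3] mat_trace_adj_mat[OF assms(1)]
      mat_trace_adj_mat_square[OF assms(1,2,4)] mat_trace_adj_mat_cube_eq
    by (intro trace_equations_solution[OF assms(3,8,7) n_eq_blocks]) (simp_all add: power3_eq_cube)
  then show ?thesis
    using graph_iso_model_graph perfect_matching_diag_matching unfolding model_graph_def by metis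
qed

end
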